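(* Let $N\ge 1$ and $S_{<N/2}=\{x\in\{0,1\}^N : wt(x)<N/2\}$. There is a quantum algorithm that, for every $x\in S_{<N/2}$, identifies $x$ using a single parity-restricted query to the IP oracle for $x$.
   Context: $wt(\cdot)$ denotes Hamming weight. For $x\in\{0,1\}^N$, the IP (inner product) oracle is the unitary acting by $|\tilde q\rangle\mapsto(-1)^{\tilde q\cdot x}|\tilde q\rangle$ for $\tilde q\in\{0,1\}^N$, where $\tilde q\cdot x=\sum_i\tilde q_ix_i$. A query is parity-restricted if the query register is in a superposition only of strings $\tilde q$ with even Hamming weight $wt(\tilde q)$. *)

theory Defs
  imports Complex_Main
begin

text \<open>Bit strings in {0,1}^N are represented as bool lists of length N.\<close>

definition bitstrings :: "nat \<Rightarrow> bool list set" where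
  "bitstrings N = {x. length x = N}"

definition wt :: "bool list \<Rightarrow> nat" where
  "wt x = length (filter id x)"

definition ip :: "bool list \<Rightarrow> bool list \<Rightarrow> nat" where
  "ip q x = card {i. i < length q \<and> i < length x \<and> q ! i \<and> x ! i}"

definition S_lt_half :: "nat \<Rightarrow> bool list set" where
  "S_lt_half N = {x \<in> bitstrings N. real (wt x) < real N / 2}"

text \<open>Computational basis of query register tensor an m-dimensional workspace.\<close>
definition basis :: "nat \<Rightarrow> nat \<Rightarrow> (bool list \<times> nat) set" where
  "basis N m = bitstrings N \<times> {..<m}"

definition ip_oracle :: "bool list \<Rightarrow> ((bool list \<times> nat) \<Rightarrow> complex) \<Rightarrow> ((bool list \<times> nat) \<Rightarrow> complex)" where
  "ip_oracle x \<psi> = (\<lambda>(q, w). (-1) ^ ip q x * \<psi> (q, w))"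

definition is_state :: "nat \<Rightarrow> nat \<Rightarrow> ((bool list \<times> nat) \<Rightarrow> complex) \<Rightarrow> bool" where
  "is_state N m \<psi> \<longleftrightarrow> (\<forall>b. b \<notin> basis N m \<longrightarrow> \<psi> b = 0) \<and>
     (\<Sum>b\<in>basis N m. (cmod (\<psi> b))\<^sup>2) = 1"

definition parity_restricted :: "((bool list \<times> nat) \<Rightarrow> complex) \<Rightarrow> bool" where
  "parity_restricted \<psi> \<longleftrightarrow> (\<forall>q w. \<psi> (q, w) \<noteq> 0 \<longrightarrow> even (wt q))"

definition is_unitary :: "nat \<Rightarrow> nat \<Rightarrow> ((bool list \<times> nat) \<Rightarrow> (bool list \<times> nat) \<Rightarrow> complex) \<Rightarrow> bool" where
  "is_unitary N m U \<longleftrightarrow> (\<forall>c\<in>basis N m. \<forall>d\<in>basis N m.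
     (\<Sum>b\<in>basis N m. cnj (U b c) * U b d) = (if c = d then 1 else 0))"

definition apply_op :: "nat \<Rightarrow> nat \<Rightarrow> ((bool list \<times> nat) \<Rightarrow> (bool list \<times> nat) \<Rightarrow> complex)
     \<Rightarrow> ((bool list \<times> nat) \<Rightarrow> complex) \<Rightarrow> ((bool list \<times> nat) \<Rightarrow> complex)" where
  "apply_op N m U \<psi> = (\<lambda>b. \<Sum>c\<in>basis N m. U b c * \<psi> c)"

definition success_prob :: "nat \<Rightarrow> nat \<Rightarrow> ((bool list \<times> nat) \<Rightarrow> complex)
     \<Rightarrow> ((bool list \<times> nat) \<Rightarrow> (bool list \<times> nat) \<Rightarrow> complex)
     \<Rightarrow> ((bool list \<times> nat) \<Rightarrow> bool list) \<Rightarrow> bool list \<Rightarrow> real" where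
  "success_prob N m \<psi> U out x =
     (\<Sum>b\<in>{b\<in>basis N m. out b = x}. (cmod (apply_op N m U (ip_oracle x \<psi>) b))\<^sup>2)"

end

theory Submission imports Defs begin

text \<open>Restricting the queries to even weight makes the oracles of x and of its complement
  coincide: for even wt q, (-1)^(q.x) = (-1)^(q.\<not>x). Query the uniform superposition of all
  even-weight strings and apply the Hadamard transform: the character orthogonality relations
  show that the result is (|x\<rangle> + |\<not>x\<rangle>)/\<surd>2. Exactly one of x, \<not>x has weight below N/2,
  so decoding each measured string to whichever of it and its complement is lighter returns x
  with certainty.\<close>

lemma ip_Nil [simp]: "ip [] x = 0"
  by (simp add: ip_def)

lemma ip_Cons [simp]: "ip (a # q) (b # x) = (if a \<and> b then 1 else 0) + ip q x"
proof -
  have "{i. i < length (a # q) \<and> i < length (b # x) \<and> (a # q) ! i \<and> (b # x) ! i}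
      = (if a \<and> b then {0} else {}) \<union> Suc ` {i. i < length q \<and> i < length x \<and> q ! i \<and> x ! i}"
    by (auto simp: image_iff less_Suc_eq_0_disj)
  then show ?thesis
    unfolding ip_def by (simp add: card_image)
qed

lemma ip_commute: "ip q x = ip x q"
  unfolding ip_def by (metis (lifting) conj_commute)

lemma wt_Nil [simp]: "wt [] = 0"
  by (simp add: wt_def)

lemma wt_Cons [simp]: "wt (a # q) = (if a then 1 else 0) + wt q"
  by (simp add: wt_def)

lemma wt_le_length: "wt x \<le> length x"
  by (simp add: wt_def)

lemma wt_map_Not: "wt (map Not x) = length x - wt x"
  by (induction x) (auto simp: Suc_diff_le wt_le_length)

lemma ip_add_ip_map_Not: "length q = length x \<Longrightarrow> ip q x + ip q (map Not x) = wt q"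
proof (induction q arbitrary: x)
  case (Cons a q)
  then obtain b x' where "x = b # x'" "length q = length x'"
    by (cases x) auto
  with Cons.IH[of x'] show ?case by auto
qed simp

lemma bitstrings_0: "bitstrings 0 = {[]}"
  by (auto simp: bitstrings_def)

lemma bitstrings_Suc: "bitstrings (Suc n) = Cons True ` bitstrings n \<union> Cons False ` bitstrings n"
  by (auto simp: bitstrings_def length_Suc_conv image_iff)

lemma finite_bitstrings [simp]: "finite (bitstrings n)"
  by (induction n) (auto simp: bitstrings_0 bitstrings_Suc)

lemma map_Not_in_bitstrings: "x \<in> bitstrings n \<Longrightarrow> map Not x \<in> bitstrings n"
  by (simp add: bitstrings_def)

lemma sum_bitstrings_Suc:
  "sum f (bitstrings (Suc n)) = (\<Sum>q\<in>bitstrings n. f (True # q)) + (\<Sum>q\<in>bitstrings n. f (False # q))"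
  unfolding bitstrings_Suc by (subst sum.union_disjoint) (auto simp: sum.reindex)

definition character :: "bool list \<Rightarrow> bool list \<Rightarrow> complex" where
  "character q x = (-1) ^ ip q x"

lemma cnj_character [simp]: "cnj (character q x) = character q x"
  by (simp add: character_def)

lemma character_Cons: "character (a # q) (b # x) = (if a \<and> b then -1 else 1) * character q x"
  by (simp add: character_def power_add)

lemma character_mult_self: "character q x * character q x = 1"
  by (simp add: character_def power_add[symmetric] mult_2[symmetric] power_mult)

lemma character_map_Not:
  assumes "length q = length x"
  shows "(-1) ^ wt q * character q x = character q (map Not x)"
proof -
  have "(-1::complex) ^ wt q = character q x * character q (map Not x)"
    using ip_add_ip_map_Not[OF assms] by (simp add: character_def power_add[symmetric])
  then have "(-1) ^ wt q * character q x = (character q x * character q x) * character q (map Not x)"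
    by (simp add: algebra_simps)
  then show ?thesis
    by (simp add: character_mult_self)
qed

lemma character_replicate_False: "character q (replicate n False) = 1"
proof -
  have "ip q (replicate n False) = 0"
    unfolding ip_def by auto
  then show ?thesis
    by (simp add: character_def)
qed

lemma sum_character_mult:
  assumes "x \<in> bitstrings n" "y \<in> bitstrings n"
  shows "(\<Sum>q\<in>bitstrings n. character q x * character q y) = (if x = y then 2 ^ n else 0)"
  using assms
proof (induction n arbitrary: x y)
  case 0
  then show ?case by (simp add: bitstrings_0 character_def)
next
  case (Suc n)
  obtain a x' where x: "x = a # x'" "x' \<in> bitstrings n"
    using Suc.prems by (cases x) (auto simp: bitstrings_def)
  obtain b y' where y: "y = b # y'" "y' \<in> bitstrings n"
    using Suc.prems by (cases y) (auto simp: bitstrings_def)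
  have "(\<Sum>q\<in>bitstrings (Suc n). character q x * character q y)
      = ((if a then -1 else 1) * (if b then -1 else 1) + 1)
          * (\<Sum>q\<in>bitstrings n. character q x' * character q y')"
    unfolding sum_bitstrings_Suc x y character_Cons
    by (simp add: sum_distrib_left algebra_simps sum.distrib)
  also have "\<dots> = (if x = y then 2 ^ Suc n else 0)"
    using Suc.IH[OF x(2) y(2)] x y by auto
  finally show ?case .
qed

lemma sum_even_wt_character_mult:
  assumes x: "x \<in> bitstrings n" and y: "y \<in> bitstrings n"
  shows "(\<Sum>q\<in>bitstrings n. if even (wt q) then character q x * character q y else 0)
       = 2 ^ n / 2 * ((if x = y then 1 else 0) + (if x = map Not y then 1 else 0))"
proof -
  have "(\<Sum>q\<in>bitstrings n. if even (wt q) then character q x * character q y else 0)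
      = (\<Sum>q\<in>bitstrings n. (character q x * character q y + character q x * character q (map Not y)) / 2)"
  proof (rule sum.cong[OF refl])
    fix q
    assume "q \<in> bitstrings n"
    then have "length q = length y"
      using y by (simp add: bitstrings_def)
    then show "(if even (wt q) then character q x * character q y else 0)
        = (character q x * character q y + character q x * character q (map Not y)) / 2"
      by (simp add: minus_one_power_iff algebra_simps flip: character_map_Not)
  qed
  also have "\<dots> = ((\<Sum>q\<in>bitstrings n. character q x * character q y)
                   + (\<Sum>q\<in>bitstrings n. character q x * character q (map Not y))) / 2"
    by (simp only: sum_divide_distrib[symmetric] sum.distrib)
  also have "\<dots> = 2 ^ n / 2 * ((if x = y then 1 else 0) + (if x = map Not y then 1 else 0))"
    using sum_character_mult[OF x y] sum_character_mult[OF x map_Not_in_bitstrings[OF y]]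
    by (simp add: field_simps)
  finally show ?thesis .
qed

lemma card_even_wt_bitstrings:
  assumes "n \<ge> 1"
  shows "card {q \<in> bitstrings n. even (wt q)} = 2 ^ (n - 1)"
proof -
  let ?z = "replicate n False"
  have z: "?z \<in> bitstrings n"
    by (simp add: bitstrings_def)
  have "?z \<noteq> map Not ?z"
    using assms by (cases n) auto
  then have "(of_nat (card {q \<in> bitstrings n. even (wt q)}) :: complex)
      = (\<Sum>q\<in>bitstrings n. if even (wt q) then character q ?z * character q ?z else 0)"
    by (simp add: character_replicate_False sum.If_cases Int_def conj_commute)
  also have "\<dots> = of_nat (2 ^ (n - 1))"
    using sum_even_wt_character_mult[OF z z] \<open>?z \<noteq> map Not ?z\<close> assms by (cases n) auto
  finally show ?thesis
    by (metis of_nat_eq_iff)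
qed

lemma sum_basis_1: "sum f (basis N 1) = (\<Sum>q\<in>bitstrings N. f (q, 0))"
proof -
  have "basis N 1 = (\<lambda>q. (q, 0)) ` bitstrings N"
    by (auto simp: basis_def)
  then show ?thesis
    by (simp add: sum.reindex inj_on_def)
qed

definition even_wt_state :: "nat \<Rightarrow> bool list \<times> nat \<Rightarrow> complex" where
  "even_wt_state N b =
     (if fst b \<in> bitstrings N \<and> snd b = 0 \<and> even (wt (fst b)) then 1 / sqrt (2 ^ (N - 1)) else 0)"

definition hadamard :: "nat \<Rightarrow> bool list \<times> nat \<Rightarrow> bool list \<times> nat \<Rightarrow> complex" where
  "hadamard N b c = character (fst b) (fst c) / sqrt (2 ^ N)"

definition decode :: "nat \<Rightarrow> bool list \<times> nat \<Rightarrow> bool list" where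
  "decode N b = (if 2 * wt (fst b) < N then fst b else map Not (fst b))"

lemma parity_restricted_even_wt_state: "parity_restricted (even_wt_state N)"
  unfolding parity_restricted_def even_wt_state_def by auto

lemma is_state_even_wt_state:
  assumes "N \<ge> 1"
  shows "is_state N 1 (even_wt_state N)"
proof -
  have "(\<Sum>b\<in>basis N 1. (cmod (even_wt_state N b))\<^sup>2)
      = (\<Sum>q\<in>bitstrings N. if even (wt q) then 1 / 2 ^ (N - 1) else 0)"
    unfolding sum_basis_1 by (rule sum.cong) (auto simp: even_wt_state_def power_divide)
  also have "\<dots> = card {q \<in> bitstrings N. even (wt q)} / 2 ^ (N - 1)"
    by (simp add: sum.If_cases Int_def conj_commute)
  also have "\<dots> = 1"
    using card_even_wt_bitstrings[OF assms] by simp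
  finally show ?thesis
    unfolding is_state_def by (auto simp: even_wt_state_def basis_def)
qed

lemma is_unitary_hadamard: "is_unitary N 1 (hadamard N)"
  unfolding is_unitary_def
proof (intro ballI)
  fix c d
  assume "c \<in> basis N 1" "d \<in> basis N 1"
  then have c: "fst c \<in> bitstrings N" "snd c = 0" and d: "fst d \<in> bitstrings N" "snd d = 0"
    by (auto simp: basis_def)
  have "(\<Sum>b\<in>basis N 1. cnj (hadamard N b c) * hadamard N b d)
      = (\<Sum>q\<in>bitstrings N. character q (fst c) * character q (fst d)) / 2 ^ N"
    unfolding sum_basis_1 sum_divide_distrib hadamard_def
    by (rule sum.cong[OF refl]) (simp flip: of_real_mult)
  also have "\<dots> = (if c = d then 1 else 0)"
    using sum_character_mult[OF c(1) d(1)] c(2) d(2) by (simp add: prod_eq_iff)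
  finally show "(\<Sum>b\<in>basis N 1. cnj (hadamard N b c) * hadamard N b d) = (if c = d then 1 else 0)" .
qed

lemma hadamard_ip_oracle_even_wt_state:
  assumes N: "N \<ge> 1" and x: "x \<in> bitstrings N" and z: "z \<in> bitstrings N"
  shows "apply_op N 1 (hadamard N) (ip_oracle x (even_wt_state N)) (z, w)
       = ((if z = x then 1 else 0) + (if z = map Not x then 1 else 0)) / sqrt 2"
proof -
  obtain M where M: "N = Suc M"
    using N by (cases N) auto
  let ?r = "complex_of_real (sqrt (2 ^ N) * sqrt (2 ^ (N - 1)))"
  have "sqrt (2 ^ N) * sqrt (2 ^ (N - 1)) = 2 ^ M * sqrt 2"
    unfolding M by (simp add: real_sqrt_mult mult.assoc)
  then have r: "?r = 2 ^ M * sqrt 2"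
    by simp
  have "apply_op N 1 (hadamard N) (ip_oracle x (even_wt_state N)) (z, w)
      = (\<Sum>q\<in>bitstrings N. if even (wt q) then character q z * character q x else 0) / ?r"
    unfolding apply_op_def sum_basis_1 sum_divide_distrib
    by (rule sum.cong[OF refl])
       (simp add: hadamard_def ip_oracle_def even_wt_state_def character_def ip_commute[of z])
  also have "\<dots> = ((if z = x then 1 else 0) + (if z = map Not x then 1 else 0)) / sqrt 2"
    unfolding sum_even_wt_character_mult[OF z x] r by (simp add: M field_simps)
  finally show ?thesis .
qed

lemma success_prob_decode:
  assumes N: "N \<ge> 1" and "x \<in> S_lt_half N"
  shows "success_prob N 1 (even_wt_state N) (hadamard N) (decode N) x = 1"
proof -
  have x: "x \<in> bitstrings N" and light: "2 * wt x < N"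
    using assms(2) by (auto simp: S_lt_half_def)
  then have "length x = N"
    by (simp add: bitstrings_def)
  then have "x \<noteq> map Not x"
    using N by (cases x) auto
  have heavy: "\<not> 2 * wt (map Not x) < N"
    using light \<open>length x = N\<close> by (simp add: wt_map_Not)
  let ?amp = "\<lambda>q. apply_op N 1 (hadamard N) (ip_oracle x (even_wt_state N)) (q, 0)"
  have "{b \<in> basis N 1. decode N b = x} = (\<lambda>q. (q, 0)) ` {q \<in> bitstrings N. decode N (q, 0) = x}"
    by (auto simp: basis_def)
  then have "success_prob N 1 (even_wt_state N) (hadamard N) (decode N) x
      = (\<Sum>q\<in>{q \<in> bitstrings N. decode N (q, 0) = x}. (cmod (?amp q))\<^sup>2)"
    unfolding success_prob_def by (simp add: sum.reindex inj_on_def)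
  also have "\<dots> = (\<Sum>q\<in>{x, map Not x}. (cmod (?amp q))\<^sup>2)"
    using x light heavy hadamard_ip_oracle_even_wt_state[OF N x]
    by (intro sum.mono_neutral_right) (auto simp: decode_def map_Not_in_bitstrings comp_def)
  also have "\<dots> = 1"
    using \<open>x \<noteq> map Not x\<close> hadamard_ip_oracle_even_wt_state[OF N x] x map_Not_in_bitstrings[OF x]
    by (simp add: norm_divide power_divide)
  finally show ?thesis .
qed

theorem lemma1:
  fixes N :: nat
  assumes "N \<ge> 1"
  shows "\<exists>m \<psi> U out. m \<ge> 1 \<and> is_state N m \<psi> \<and> parity_restricted \<psi> \<and> is_unitary N m U \<and>
           (\<forall>x\<in>S_lt_half N. success_prob N m \<psi> U out x = 1)"
  using is_state_even_wt_state[OF assms] parity_restricted_even_wt_state is_unitary_hadamard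
    success_prob_decode[OF assms]
  by blast

end
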